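(* Let $\xi$ be a model and suppose the minimizer $\phi$ of $P_{0,\xi}$ on $\mathcal{C}$ is of the form $\phi(t)=m(1-t)+c$ with $m,c\in(0,\infty)$. Let $\eta(t)=\xi(1)-\int_t^1\int_0^s\phi(\tau)^{-2}d\tau\,ds$ be its formal conjugate. Then: (1) $m,c$ solve the system $$\xi(1)=\frac1m\Big(\frac1m\log\Big(\frac{c+m}{c}\Big)-\frac1{c+m}\Big),\qquad \frac1{\xi'(1)}=c(c+m);$$ (2) $\eta''(1)\ge\xi''(1)$; (3) $\eta''(0)\ge\xi''(0)$.
   Context: A model is $\xi(t)=\sum_{p\ge2}\beta_p^2t^p$, real $\beta_p$ not all zero, with $\xi(1+\epsilon)<\infty$ for some $\epsilon>0$. $\mathcal{C}$ is the set of $\phi\in C([0,1])$ with $\phi\ge0$, non-increasing and concave; $P_{0,\xi}(\phi)=\int_0^1(\xi''\phi+1/\phi)dx$. *)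

theory Defs
  imports "HOL-Analysis.Analysis"
begin

definition xi :: "(nat \<Rightarrow> real) \<Rightarrow> real \<Rightarrow> real" where
  "xi \<beta> t = (\<Sum>p. (if 2 \<le> p then (\<beta> p)\<^sup>2 * t ^ p else 0))"

definition is_model :: "(nat \<Rightarrow> real) \<Rightarrow> bool" where
  "is_model \<beta> \<longleftrightarrow> (\<exists>p\<ge>2. \<beta> p \<noteq> 0) \<and>
     (\<exists>\<epsilon>>0. summable (\<lambda>p. if 2 \<le> p then (\<beta> p)\<^sup>2 * (1 + \<epsilon>) ^ p else 0))"

definition classC :: "(real \<Rightarrow> real) set" where
  "classC = {\<phi>. continuous_on {0..1} \<phi> \<and> (\<forall>x\<in>{0..1}. 0 \<le> \<phi> x) \<and>
     (\<forall>x\<in>{0..1}. \<forall>y\<in>{0..1}. x \<le> y \<longrightarrow> \<phi> y \<le> \<phi> x) \<and> concave_on {0..1} \<phi>}"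

text \<open>The functional P_{0,xi}(phi) = int_0^1 (xi'' phi + 1/phi) dx, valued in [0,infinity]
  (the integrand is nonnegative; 1/0 is read as +infinity).\<close>
definition P0 :: "(nat \<Rightarrow> real) \<Rightarrow> (real \<Rightarrow> real) \<Rightarrow> ennreal" where
  "P0 \<beta> \<phi> = (\<integral>\<^sup>+ x\<in>{0..1}. (ennreal (deriv (deriv (xi \<beta>)) x * \<phi> x)
        + (if \<phi> x = 0 then \<infinity> else ennreal (1 / \<phi> x))) \<partial>lborel)"

definition is_minimizer :: "(nat \<Rightarrow> real) \<Rightarrow> (real \<Rightarrow> real) \<Rightarrow> bool" where
  "is_minimizer \<beta> \<phi> \<longleftrightarrow> \<phi> \<in> classC \<and> (\<forall>\<psi>\<in>classC. P0 \<beta> \<phi> \<le> P0 \<beta> \<psi>)"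

definition conj_eta :: "(nat \<Rightarrow> real) \<Rightarrow> (real \<Rightarrow> real) \<Rightarrow> real \<Rightarrow> real" where
  "conj_eta \<beta> \<phi> t = xi \<beta> 1 - integral {t..1} (\<lambda>s. integral {0..s} (\<lambda>\<tau>. 1 / (\<phi> \<tau>)\<^sup>2))"

end

theory Submission
  imports Defs
begin

text \<open>
  Perturbing the minimizer \<open>\<phi>\<close> inside \<open>\<C>\<close> as \<open>\<phi> + s h\<close> with \<open>s \<down> 0\<close> gives the first variation
  inequality \<open>\<integral> h/\<phi>\<^sup>2 \<le> \<integral> \<xi>'' h\<close>. For the affine profile \<open>\<phi> = m(1 - t) + c\<close> the directions
  \<open>\<plusminus>1\<close> and \<open>\<plusminus>(1 - t)\<close> are admissible, so \<open>\<integral> \<xi>'' = \<integral> \<phi>\<^sup>-\<^sup>2\<close> and \<open>\<integral> \<xi>''(1 - t) = \<integral> (1 - t)\<phi>\<^sup>-\<^sup>2\<close>.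
  By Taylor's formula the left-hand sides are \<open>\<xi>'(1)\<close> and \<open>\<xi>(1)\<close>, and the right-hand sides are
  elementary integrals; this is (1). The concave hinges \<open>min (1 - a) (1 - t)\<close> are admissible
  directions as well, so \<open>\<integral> (\<xi>'' - \<phi>\<^sup>-\<^sup>2) min (1 - a) (1 - t) \<ge> 0\<close>. Subtracting the two
  identities and letting \<open>a\<close> tend to \<open>1\<close> (resp. \<open>0\<close>) localizes this at the endpoint, where it
  says \<open>\<xi>'' \<le> \<phi>\<^sup>-\<^sup>2 = \<eta>''\<close>; this is (2) and (3).
\<close>

section \<open>The power series \<open>\<xi>\<close>\<close>

definition xi_coeff :: "(nat \<Rightarrow> real) \<Rightarrow> nat \<Rightarrow> real" where
  "xi_coeff \<beta> n = (if 2 \<le> n then (\<beta> n)\<^sup>2 else 0)"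

lemma xi_eq_powser: "xi \<beta> = (\<lambda>t. \<Sum>n. xi_coeff \<beta> n * t ^ n)"
  unfolding xi_def xi_coeff_def by (intro ext suminf_cong) auto

lemma xi_0 [simp]: "xi \<beta> 0 = 0"
  unfolding xi_eq_powser using powser_zero[of "xi_coeff \<beta>"] by (simp add: xi_coeff_def)

lemma is_model_xi_powser_radius:
  assumes "is_model \<beta>"
  obtains R where "1 < R" "\<And>x. norm x < R \<Longrightarrow> summable (\<lambda>n. xi_coeff \<beta> n * x ^ n)"
proof -
  obtain e where e: "0 < e" "summable (\<lambda>p. if 2 \<le> p then (\<beta> p)\<^sup>2 * (1 + e) ^ p else 0)"
    using assms unfolding is_model_def by blast
  moreover have "(\<lambda>p. if 2 \<le> p then (\<beta> p)\<^sup>2 * (1 + e) ^ p else 0) = (\<lambda>n. xi_coeff \<beta> n * (1 + e) ^ n)"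
    by (auto simp: xi_coeff_def)
  ultimately show ?thesis
    using that[of "1 + e"] powser_inside[of "xi_coeff \<beta>" "1 + e"] by auto
qed

lemma deriv_powser_eventually_eq:
  fixes a :: "nat \<Rightarrow> real"
  assumes "\<And>x. norm x < R \<Longrightarrow> summable (\<lambda>n. a n * x ^ n)" "norm x < R"
  shows "\<forall>\<^sub>F y in nhds x. deriv (\<lambda>y. \<Sum>n. a n * y ^ n) y = (\<Sum>n. diffs a n * y ^ n)"
proof -
  have "\<forall>\<^sub>F y in nhds x. y \<in> ball 0 R" using assms(2) by (intro eventually_nhds_in_open) auto
  then show ?thesis
    by (rule eventually_mono) (auto intro!: DERIV_imp_deriv termdiffs_strong'[OF assms(1)])
qed

lemma is_model_xi_derivatives:
  assumes "is_model \<beta>"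
  shows xi_has_deriv: "\<And>x. x \<in> {0..1} \<Longrightarrow> (xi \<beta> has_real_derivative deriv (xi \<beta>) x) (at x)"
    and deriv_xi_has_deriv:
      "\<And>x. x \<in> {0..1} \<Longrightarrow> (deriv (xi \<beta>) has_real_derivative deriv (deriv (xi \<beta>)) x) (at x)"
    and continuous_on_xi'': "continuous_on {0..1} (deriv (deriv (xi \<beta>)))"
    and xi''_nonneg: "\<And>x. x \<in> {0..1} \<Longrightarrow> 0 \<le> deriv (deriv (xi \<beta>)) x"
    and deriv_xi_0: "deriv (xi \<beta>) 0 = 0"
proof -
  obtain R where R: "1 < R" and sm0: "\<And>x. norm x < R \<Longrightarrow> summable (\<lambda>n. xi_coeff \<beta> n * x ^ n)"
    using is_model_xi_powser_radius[OF assms] by blast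
  define a where "a = xi_coeff \<beta>"
  define xi' where "xi' = (\<lambda>x::real. \<Sum>n. diffs a n * x ^ n)"
  define xi'' where "xi'' = (\<lambda>x::real. \<Sum>n. diffs (diffs a) n * x ^ n)"
  have sm1: "\<And>x. norm x < R \<Longrightarrow> summable (\<lambda>n. diffs a n * x ^ n)"
    using termdiff_converges[of _ R a] sm0 unfolding a_def by blast
  have sm2: "\<And>x. norm x < R \<Longrightarrow> summable (\<lambda>n. diffs (diffs a) n * x ^ n)"
    using termdiff_converges[of _ R "diffs a"] sm1 by blast
  have d0: "(xi \<beta> has_real_derivative xi' x) (at x)" if "norm x < R" for x
    using termdiffs_strong'[of R a x] sm0 that unfolding xi_eq_powser xi'_def a_def by blast
  have d1: "(xi' has_real_derivative xi'' x) (at x)" if "norm x < R" for x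
    using termdiffs_strong'[OF sm1 that] unfolding xi'_def xi''_def .
  have d2: "isCont xi'' x" if "norm x < R" for x
    using termdiffs_strong'[OF sm2 that] unfolding xi''_def by (rule DERIV_isCont)
  have near: "\<forall>\<^sub>F y in nhds x. deriv (xi \<beta>) y = xi' y" if "norm x < R" for x
    using deriv_powser_eventually_eq[OF sm0 that] unfolding xi_eq_powser xi'_def a_def .
  have xi''_eq: "deriv (deriv (xi \<beta>)) x = xi'' x" if "norm x < R" for x
    using deriv_cong_ev[OF near[OF that] refl] DERIV_imp_deriv[OF d1[OF that]] by simp
  have in_R: "norm x < R" if "x \<in> {0..1}" for x :: real using that R by auto
  show "(xi \<beta> has_real_derivative deriv (xi \<beta>) x) (at x)" if "x \<in> {0..1}" for x
    using d0[OF in_R[OF that]] DERIV_imp_deriv[OF d0[OF in_R[OF that]]] by simp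
  show "(deriv (xi \<beta>) has_real_derivative deriv (deriv (xi \<beta>)) x) (at x)" if "x \<in> {0..1}" for x
    using DERIV_cong_ev[OF refl near[OF in_R[OF that]] refl] d1[OF in_R[OF that]]
      xi''_eq[OF in_R[OF that]] by simp
  show "continuous_on {0..1} (deriv (deriv (xi \<beta>)))"
  proof (rule continuous_on_eq)
    show "continuous_on {0..1} xi''" using d2 in_R by (intro continuous_at_imp_continuous_on) auto
  qed (use xi''_eq in_R in fastforce)
  show "0 \<le> deriv (deriv (xi \<beta>)) x" if "x \<in> {0..1}" for x
  proof -
    have "0 \<le> xi'' x"
      unfolding xi''_def using sm2[OF in_R[OF that]] that
      by (intro suminf_nonneg) (auto simp: diffs_def a_def xi_coeff_def)
    then show ?thesis using xi''_eq[OF in_R[OF that]] by simp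
  qed
  show "deriv (xi \<beta>) 0 = 0"
    using DERIV_imp_deriv[OF d0] powser_zero[of "diffs a"] R
    by (simp add: xi'_def diffs_def a_def xi_coeff_def)
qed

lemma fundamental_theorem_of_calculus_real:
  fixes F f :: "real \<Rightarrow> real"
  assumes "a \<le> b" "\<And>x. x \<in> {a..b} \<Longrightarrow> (F has_real_derivative f x) (at x)"
  shows "(f has_integral (F b - F a)) {a..b}"
  using assms
  by (intro fundamental_theorem_of_calculus)
     (auto simp: has_real_derivative_iff_has_vector_derivative[symmetric] intro: has_field_derivative_at_within)

lemma has_integral_xi'':
  assumes "is_model \<beta>"
  shows "(deriv (deriv (xi \<beta>)) has_integral deriv (xi \<beta>) 1) {0..1}"
  using fundamental_theorem_of_calculus_real[of 0 1 "deriv (xi \<beta>)"]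
    deriv_xi_has_deriv[OF assms] deriv_xi_0[OF assms] by simp

lemma has_integral_xi''_mult_one_minus:
  assumes "is_model \<beta>"
  shows "((\<lambda>t. deriv (deriv (xi \<beta>)) t * (1 - t)) has_integral xi \<beta> 1) {0..1}"
proof -
  let ?F = "\<lambda>t. deriv (xi \<beta>) t * (1 - t) + xi \<beta> t"
  have "((\<lambda>t. deriv (deriv (xi \<beta>)) t * (1 - t)) has_integral ?F 1 - ?F 0) {0..1}"
  proof (rule fundamental_theorem_of_calculus_real)
    fix x :: real assume "x \<in> {0..1}"
    then show "(?F has_real_derivative deriv (deriv (xi \<beta>)) x * (1 - x)) (at x)"
      using deriv_xi_has_deriv[OF assms] xi_has_deriv[OF assms]
      by (auto intro!: derivative_eq_intros)
  qed simp
  then show ?thesis using deriv_xi_0[OF assms] by simp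
qed

section \<open>The functional \<open>P\<^sub>0\<close> and the class \<open>\<C>\<close>\<close>

lemma P0_eq_integral:
  assumes "is_model \<beta>" "continuous_on {0..1} \<psi>" "\<forall>x\<in>{0..1}. 0 < \<psi> x"
  shows "P0 \<beta> \<psi> = ennreal (integral {0..1} (\<lambda>x. deriv (deriv (xi \<beta>)) x * \<psi> x + 1 / \<psi> x))"
proof -
  define F where "F = (\<lambda>x. deriv (deriv (xi \<beta>)) x * \<psi> x + 1 / \<psi> x)"
  have F_nonneg: "0 \<le> F x" if "x \<in> {0..1}" for x
  proof -
    have "0 < \<psi> x" using assms(3) that by blast
    then show ?thesis using xi''_nonneg[OF assms(1) that] unfolding F_def by simp
  qed
  have F_integral: "(F has_integral integral {0..1} F) {0..1}"
    unfolding F_def using assms(3)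
    by (intro integrable_integral integrable_continuous_interval continuous_intros
        continuous_on_xi''[OF assms(1)] assms(2)) auto
  have "(\<integral>\<^sup>+ x. ennreal (F x) * indicator {0..1} x \<partial>lborel) = ennreal (integral {0..1} F)"
    by (rule nn_integral_has_integral_lebesgue'[OF F_nonneg F_integral])
  moreover have "P0 \<beta> \<psi> = (\<integral>\<^sup>+ x. ennreal (F x) * indicator {0..1} x \<partial>lborel)"
    unfolding P0_def
  proof (intro nn_integral_cong)
    fix x :: real
    show "(ennreal (deriv (deriv (xi \<beta>)) x * \<psi> x) + (if \<psi> x = 0 then \<infinity> else ennreal (1 / \<psi> x)))
        * indicator {0..1} x = ennreal (F x) * indicator {0..1} x"
    proof (cases "x \<in> {0..1}")
      case True
      then have "0 < \<psi> x" "0 \<le> deriv (deriv (xi \<beta>)) x"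
        using assms(3) xi''_nonneg[OF assms(1)] by auto
      then show ?thesis using True by (simp add: F_def)
    qed simp
  qed
  ultimately show ?thesis unfolding F_def by simp
qed

lemma classC_cong:
  assumes "\<And>t. t \<in> {0..1} \<Longrightarrow> \<phi> t = \<psi> t"
  shows "\<phi> \<in> classC \<longleftrightarrow> \<psi> \<in> classC"
proof -
  have "u *\<^sub>R x + v *\<^sub>R y \<in> {0..1}"
    if "x \<in> {0..1}" "y \<in> {0..1}" "0 \<le> u" "0 \<le> v" "u + v = 1" for x y u v :: real
    using that by (intro convexD) auto
  then have "concave_on {0..1} \<phi> \<longleftrightarrow> concave_on {0..1} \<psi>"
    using assms by (auto simp: concave_on_iff)
  moreover have "continuous_on {0..1} \<phi> \<longleftrightarrow> continuous_on {0..1} \<psi>"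
    using assms by (intro continuous_on_cong) auto
  ultimately show ?thesis
    using assms unfolding classC_def by auto
qed

lemma concave_on_min:
  fixes f g :: "'a::real_vector \<Rightarrow> real"
  assumes "concave_on S f" "concave_on S g"
  shows "concave_on S (\<lambda>x. min (f x) (g x))"
  unfolding concave_on_iff
proof (intro conjI ballI allI impI)
  show "convex S" using assms(1) by (rule concave_on_imp_convex)
  fix x y and u v :: real
  assume xy: "x \<in> S" "y \<in> S" and uv: "0 \<le> u" "0 \<le> v" "u + v = 1"
  have "u * min (f x) (g x) + v * min (f y) (g y) \<le> u * f x + v * f y"
    "u * min (f x) (g x) + v * min (f y) (g y) \<le> u * g x + v * g y"
    using uv by (auto intro!: add_mono mult_left_mono)
  moreover have "u * f x + v * f y \<le> f (u *\<^sub>R x + v *\<^sub>R y)" "u * g x + v * g y \<le> g (u *\<^sub>R x + v *\<^sub>R y)"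
    using assms xy uv by (auto simp: concave_on_iff)
  ultimately show "u * min (f x) (g x) + v * min (f y) (g y)
      \<le> min (f (u *\<^sub>R x + v *\<^sub>R y)) (g (u *\<^sub>R x + v *\<^sub>R y))"
    by linarith
qed

lemma affine_hinge_in_classC:
  assumes "0 \<le> m" "0 \<le> c" "0 \<le> g" "a \<le> 1"
    and "\<And>t. t \<in> {0..1} \<Longrightarrow> f t = m * (1 - t) + c + g * min (1 - a) (1 - t)"
  shows "f \<in> classC"
proof -
  let ?h = "\<lambda>t::real. m * (1 - t) + c + g * min (1 - a) (1 - t)"
  have one_minus: "concave_on {0..1} (\<lambda>t::real. 1 - t)"
    by (intro concave_on_diff) (simp_all add: concave_on_const convex_on_ident)
  have "?h \<in> classC" unfolding classC_def
  proof (intro CollectI conjI ballI impI)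
    show "continuous_on {0..1} ?h" by (intro continuous_intros)
    show "0 \<le> ?h t" if "t \<in> {0..1}" for t using that assms by simp
    show "?h y \<le> ?h x" if "x \<in> {0..1}" "y \<in> {0..1}" "x \<le> y" for x y
      using that assms by (intro add_mono mult_left_mono) auto
    show "concave_on {0..1} ?h"
      using assms one_minus
      by (intro concave_on_add concave_on_cmul concave_on_min) (simp_all add: concave_on_const)
  qed
  then show ?thesis using classC_cong[of f ?h] assms(5) by blast
qed

section \<open>First variation\<close>

lemma inverse_add_le_second_order:
  fixes u w s c M :: real
  assumes "0 < c" "c \<le> u" "\<bar>w\<bar> \<le> M" "0 \<le> s" "s * M \<le> c / 2"
  shows "1 / (u + s * w) \<le> 1 / u - s * (w / u\<^sup>2) + s\<^sup>2 * (2 * M\<^sup>2 / c ^ 3)"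
proof -
  have sw: "\<bar>s * w\<bar> \<le> s * M" using assms by (simp add: abs_mult mult_left_mono)
  then have denom: "c / 2 \<le> u + s * w" using assms by linarith
  have "1 / (u + s * w) = 1 / u - s * (w / u\<^sup>2) + (s * w)\<^sup>2 / (u\<^sup>2 * (u + s * w))"
  proof -
    have "u + s * w \<noteq> 0" "u \<noteq> 0" using denom assms by auto
    then show ?thesis by (simp add: divide_simps power2_eq_square) (simp add: algebra_simps)
  qed
  also have "(s * w)\<^sup>2 / (u\<^sup>2 * (u + s * w)) \<le> (s * M)\<^sup>2 / (c\<^sup>2 * (c / 2))"
  proof (rule frac_le)
    show "(s * w)\<^sup>2 \<le> (s * M)\<^sup>2" using power_mono[OF sw abs_ge_zero, of 2] by simp
    show "c\<^sup>2 * (c / 2) \<le> u\<^sup>2 * (u + s * w)"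
      using assms denom by (intro mult_mono power_mono) auto
  qed (use assms in auto)
  also have "(s * M)\<^sup>2 / (c\<^sup>2 * (c / 2)) = s\<^sup>2 * (2 * M\<^sup>2 / c ^ 3)"
    using assms(1) by (simp add: field_simps power2_eq_square power3_eq_cube)
  finally show ?thesis by simp
qed

lemma integral_perturbation_le:
  fixes p f h :: "real \<Rightarrow> real"
  assumes cont: "continuous_on {0..1} p" "continuous_on {0..1} f" "continuous_on {0..1} h"
    and "0 < c" "\<forall>t\<in>{0..1}. c \<le> f t" "\<forall>t\<in>{0..1}. \<bar>h t\<bar> \<le> M" "0 \<le> s" "s * M \<le> c / 2"
  shows "integral {0..1} (\<lambda>t. p t * (f t + s * h t) + 1 / (f t + s * h t))
     \<le> integral {0..1} (\<lambda>t. p t * f t + 1 / f t) + s * integral {0..1} (\<lambda>t. p t * h t)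
       - s * integral {0..1} (\<lambda>t. h t / (f t)\<^sup>2) + s\<^sup>2 * (2 * M\<^sup>2 / c ^ 3)"
proof -
  define K where "K = 2 * M\<^sup>2 / c ^ 3"
  have f_nz: "f t \<noteq> 0" if "t \<in> {0..1}" for t using assms that by force
  have bound: "1 / (f t + s * h t) \<le> 1 / f t - s * (h t / (f t)\<^sup>2) + s\<^sup>2 * K"
    if "t \<in> {0..1}" for t
    unfolding K_def using assms that by (intro inverse_add_le_second_order) auto
  have perturbed_nz: "f t + s * h t \<noteq> 0" if "t \<in> {0..1}" for t
  proof -
    have "\<bar>s * h t\<bar> \<le> s * M" using assms that by (simp add: abs_mult mult_left_mono)
    then show ?thesis using assms that by force
  qed
  have int0: "(\<lambda>t. p t * f t + 1 / f t) integrable_on {0..1}"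
    by (intro integrable_continuous_interval continuous_intros cont) (use f_nz in auto)
  have int1: "(\<lambda>t. p t * h t) integrable_on {0..1}"
    by (intro integrable_continuous_interval continuous_intros cont)
  have int2: "(\<lambda>t. h t / (f t)\<^sup>2) integrable_on {0..1}"
    by (intro integrable_continuous_interval continuous_intros cont) (use f_nz in auto)
  have int3: "(\<lambda>t. p t * (f t + s * h t) + 1 / (f t + s * h t)) integrable_on {0..1}"
    by (intro integrable_continuous_interval continuous_intros cont) (use perturbed_nz in auto)
  have "integral {0..1} (\<lambda>t. p t * (f t + s * h t) + 1 / (f t + s * h t))
      \<le> integral {0..1} (\<lambda>t. (p t * f t + 1 / f t) + s * (p t * h t) - s * (h t / (f t)\<^sup>2) + s\<^sup>2 * K)"
  proof (rule integral_le[OF int3])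
    show "(\<lambda>t. (p t * f t + 1 / f t) + s * (p t * h t) - s * (h t / (f t)\<^sup>2) + s\<^sup>2 * K)
        integrable_on {0..1}"
      using f_nz by (intro integrable_continuous_interval continuous_intros cont) auto
    fix t :: real assume "t \<in> {0..1}"
    moreover have "p t * (f t + s * h t) = p t * f t + s * (p t * h t)" by (simp add: algebra_simps)
    ultimately show "p t * (f t + s * h t) + 1 / (f t + s * h t)
        \<le> (p t * f t + 1 / f t) + s * (p t * h t) - s * (h t / (f t)\<^sup>2) + s\<^sup>2 * K"
      using bound by fastforce
  qed
  also have "\<dots> = integral {0..1} (\<lambda>t. p t * f t + 1 / f t) + s * integral {0..1} (\<lambda>t. p t * h t)
       - s * integral {0..1} (\<lambda>t. h t / (f t)\<^sup>2) + s\<^sup>2 * K"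
    using int0 int1 int2
    by (intro integral_unique has_integral_add has_integral_diff has_integral_mult_right
        integrable_integral) (use has_integral_const_real[of K 0 1] in auto)
  finally show ?thesis unfolding K_def .
qed

lemma nonneg_if_small_quadratic_nonneg:
  fixes x K s1 :: real
  assumes "0 < s1" "\<And>s. 0 < s \<Longrightarrow> s < s1 \<Longrightarrow> 0 \<le> s * x + s\<^sup>2 * K"
  shows "0 \<le> x"
proof (rule ccontr)
  assume "\<not> 0 \<le> x"
  define s where "s = min (s1 / 2) (- x / (2 * (\<bar>K\<bar> + 1)))"
  have "0 < - x / (2 * (\<bar>K\<bar> + 1))" using \<open>\<not> 0 \<le> x\<close> by (intro divide_pos_pos) auto
  then have s: "0 < s" "s < s1" unfolding s_def using assms(1) by auto
  have "s \<le> - x / (2 * (\<bar>K\<bar> + 1))" unfolding s_def by (rule min.cobounded2)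
  then have "s * (2 * (\<bar>K\<bar> + 1)) \<le> - x"
    using pos_le_divide_eq[of "2 * (\<bar>K\<bar> + 1)" s "- x"] by simp
  moreover have "s * K < s * (2 * (\<bar>K\<bar> + 1))"
    using s(1) abs_ge_self[of K] by (intro le_less_trans[OF mult_left_mono mult_strict_left_mono]) auto
  ultimately have "x + s * K < 0" by linarith
  then have "s * (x + s * K) < 0" by (rule mult_pos_neg[OF s(1)])
  then show False using assms(2)[OF s] by (simp add: power2_eq_square algebra_simps)
qed

lemma first_variation_le:
  fixes p f h :: "real \<Rightarrow> real"
  assumes cont: "continuous_on {0..1} p" "continuous_on {0..1} f" "continuous_on {0..1} h"
    and f_ge: "0 < c" "\<forall>t\<in>{0..1}. c \<le> f t" and h_le: "\<forall>t\<in>{0..1}. \<bar>h t\<bar> \<le> M" and "0 < s0"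
    and minimal: "\<And>s. 0 < s \<Longrightarrow> s < s0 \<Longrightarrow>
        integral {0..1} (\<lambda>t. p t * f t + 1 / f t)
          \<le> integral {0..1} (\<lambda>t. p t * (f t + s * h t) + 1 / (f t + s * h t))"
  shows "integral {0..1} (\<lambda>t. h t / (f t)\<^sup>2) \<le> integral {0..1} (\<lambda>t. p t * h t)"
proof -
  define A where "A = integral {0..1} (\<lambda>t. p t * h t)"
  define B where "B = integral {0..1} (\<lambda>t. h t / (f t)\<^sup>2)"
  define K where "K = 2 * M\<^sup>2 / c ^ 3"
  have "0 \<le> M" using h_le by fastforce
  define s1 where "s1 = min s0 (c / (2 * (M + 1)))"
  have "0 < s1" unfolding s1_def using \<open>0 < s0\<close> f_ge \<open>0 \<le> M\<close> by auto
  moreover have "0 \<le> s * (A - B) + s\<^sup>2 * K" if s: "0 < s" "s < s1" for s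
  proof -
    have "s * (M + 1) \<le> c / 2"
      using s \<open>0 \<le> M\<close> unfolding s1_def by (simp add: field_simps)
    moreover have "s * M \<le> s * (M + 1)" using s by simp
    ultimately have "s * M \<le> c / 2" by linarith
    then have "integral {0..1} (\<lambda>t. p t * (f t + s * h t) + 1 / (f t + s * h t))
        \<le> integral {0..1} (\<lambda>t. p t * f t + 1 / f t) + s * A - s * B + s\<^sup>2 * K"
      unfolding A_def B_def K_def using s by (intro integral_perturbation_le[OF cont f_ge h_le]) auto
    moreover have "s < s0" using s unfolding s1_def by simp
    ultimately show ?thesis using minimal[of s] s by (simp add: right_diff_distrib)
  qed
  ultimately show ?thesis
    unfolding A_def B_def by (rule nonneg_if_small_quadratic_nonneg[THEN diff_ge_0_iff_ge[THEN iffD1]])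
qed

lemma minimizer_first_variation:
  assumes model: "is_model \<beta>" and minimizer: "is_minimizer \<beta> \<phi>"
    and pos: "\<forall>t\<in>{0..1}. 0 < \<phi> t" and h: "continuous_on {0..1} h" and "0 < s0"
    and perturb: "\<And>s. 0 < s \<Longrightarrow> s < s0 \<Longrightarrow> (\<lambda>t. \<phi> t + s * h t) \<in> classC"
  shows "integral {0..1} (\<lambda>t. h t / (\<phi> t)\<^sup>2) \<le> integral {0..1} (\<lambda>t. deriv (deriv (xi \<beta>)) t * h t)"
proof -
  let ?p = "deriv (deriv (xi \<beta>))"
  have \<phi>: "continuous_on {0..1} \<phi>" using minimizer by (simp add: is_minimizer_def classC_def)
  obtain t0 where t0: "t0 \<in> {0..1}" "\<forall>t\<in>{0..1}. \<phi> t0 \<le> \<phi> t"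
    using continuous_attains_inf[OF compact_Icc _ \<phi>] by auto
  define c where "c = \<phi> t0"
  have c: "0 < c" "\<forall>t\<in>{0..1}. c \<le> \<phi> t" unfolding c_def using t0 pos by auto
  obtain M where M: "\<forall>t\<in>{0..1}. \<bar>h t\<bar> \<le> M"
    using continuous_on_compact_bound[OF compact_Icc h] by (metis real_norm_def)
  then have "0 \<le> M" by fastforce
  define s1 where "s1 = min s0 (c / (2 * (M + 1)))"
  have "0 < s1" unfolding s1_def using \<open>0 < s0\<close> c \<open>0 \<le> M\<close> by auto
  show ?thesis
  proof (rule first_variation_le[OF continuous_on_xi''[OF model] \<phi> h c M \<open>0 < s1\<close>])
    fix s assume s: "0 < s" "s < s1"
    have "s * (M + 1) \<le> c / 2"
      using s \<open>0 \<le> M\<close> unfolding s1_def by (simp add: field_simps)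
    have perturbed_pos: "0 < \<phi> t + s * h t" if "t \<in> {0..1}" for t
    proof -
      have "\<bar>h t\<bar> \<le> M" using M that by blast
      then have "\<bar>s * h t\<bar> \<le> s * (M + 1)" using s by (simp add: abs_mult mult_left_mono)
      moreover have "c \<le> \<phi> t" using c that by blast
      ultimately show ?thesis using \<open>s * (M + 1) \<le> c / 2\<close> c(1) unfolding abs_le_iff by linarith
    qed
    have perturbed: "(\<lambda>t. \<phi> t + s * h t) \<in> classC" using perturb s unfolding s1_def by simp
    then have "P0 \<beta> \<phi> \<le> P0 \<beta> (\<lambda>t. \<phi> t + s * h t)"
      using minimizer unfolding is_minimizer_def by blast
    moreover have "P0 \<beta> (\<lambda>t. \<phi> t + s * h t)
        = ennreal (integral {0..1} (\<lambda>t. ?p t * (\<phi> t + s * h t) + 1 / (\<phi> t + s * h t)))"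
      using perturbed perturbed_pos by (intro P0_eq_integral model) (auto simp: classC_def)
    moreover have "0 \<le> integral {0..1} (\<lambda>t. ?p t * (\<phi> t + s * h t) + 1 / (\<phi> t + s * h t))"
    proof (rule integral_nonneg)
      show "(\<lambda>t. ?p t * (\<phi> t + s * h t) + 1 / (\<phi> t + s * h t)) integrable_on {0..1}"
        by (intro integrable_continuous_interval continuous_intros continuous_on_xi''[OF model] \<phi> h)
          (use perturbed_pos in force)
      fix t :: real assume "t \<in> {0..1}"
      then show "0 \<le> ?p t * (\<phi> t + s * h t) + 1 / (\<phi> t + s * h t)"
        using perturbed_pos xi''_nonneg[OF model] by (simp add: less_imp_le)
    qed
    ultimately show "integral {0..1} (\<lambda>t. ?p t * \<phi> t + 1 / \<phi> t)
        \<le> integral {0..1} (\<lambda>t. ?p t * (\<phi> t + s * h t) + 1 / (\<phi> t + s * h t))"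
      using P0_eq_integral[OF model \<phi> pos] by simp
  qed
qed

section \<open>Localization at the endpoints\<close>

lemma has_integral_min_0_diff:
  fixes a :: real
  assumes "0 \<le> a" "a \<le> 1"
  shows "((\<lambda>t. min 0 (a - t)) has_integral - ((1 - a)\<^sup>2 / 2)) {0..1}"
proof -
  have "((\<lambda>t. min 0 (a - t)) has_integral 0) {0..a}"
    by (rule has_integral_eq[OF _ has_integral_0]) auto
  moreover have "((\<lambda>t. min 0 (a - t)) has_integral - ((1 - a)\<^sup>2 / 2)) {a..1}"
  proof -
    have "((\<lambda>t. a - t) has_integral (a * 1 - 1\<^sup>2 / 2) - (a * a - a\<^sup>2 / 2)) {a..1}"
      by (rule fundamental_theorem_of_calculus_real) (use assms in \<open>auto intro!: derivative_eq_intros\<close>)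
    moreover have "(a * 1 - 1\<^sup>2 / 2) - (a * a - a\<^sup>2 / 2) = - ((1 - a)\<^sup>2 / 2)"
      by (simp add: power2_eq_square field_simps)
    ultimately have "((\<lambda>t. a - t) has_integral - ((1 - a)\<^sup>2 / 2)) {a..1}" by simp
    then show ?thesis by (rule has_integral_eq[rotated]) auto
  qed
  ultimately show ?thesis using has_integral_combine[OF assms] by (metis add_0)
qed

lemma has_integral_min_diff_0:
  fixes a :: real
  assumes "0 \<le> a" "a \<le> 1"
  shows "((\<lambda>t. min (t - a) 0) has_integral - (a\<^sup>2 / 2)) {0..1}"
proof -
  have "((\<lambda>t. min (t - a) 0) has_integral - (a\<^sup>2 / 2)) {0..a}"
  proof -
    have "((\<lambda>t. t - a) has_integral (a\<^sup>2 / 2 - a * a) - (0\<^sup>2 / 2 - a * 0)) {0..a}"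
      by (rule fundamental_theorem_of_calculus_real) (use assms in \<open>auto intro!: derivative_eq_intros\<close>)
    then have "((\<lambda>t. t - a) has_integral - (a\<^sup>2 / 2)) {0..a}"
      by (simp add: power2_eq_square)
    then show ?thesis by (rule has_integral_eq[rotated]) auto
  qed
  moreover have "((\<lambda>t. min (t - a) 0) has_integral 0) {a..1}"
    by (rule has_integral_eq[OF _ has_integral_0]) auto
  ultimately show ?thesis using has_integral_combine[OF assms] by (metis add_0_right)
qed

lemma nonpos_if_localized_integrals_nonneg:
  fixes G :: "real \<Rightarrow> real"
  assumes G: "continuous_on {0..1} G" and t0: "t0 \<in> {0..1}"
    and tests: "\<And>d. 0 < d \<Longrightarrow> \<exists>k. continuous_on {0..1} k \<and> integral {0..1} k < 0
        \<and> (\<forall>t\<in>{0..1}. k t \<le> 0 \<and> (d \<le> dist t t0 \<longrightarrow> k t = 0))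
        \<and> 0 \<le> integral {0..1} (\<lambda>t. G t * k t)"
  shows "G t0 \<le> 0"
proof (rule ccontr)
  assume "\<not> G t0 \<le> 0"
  define \<delta> where "\<delta> = G t0 / 2"
  have "0 < \<delta>" using \<open>\<not> G t0 \<le> 0\<close> unfolding \<delta>_def by simp
  then obtain d where "0 < d" and d: "\<forall>t\<in>{0..1}. dist t t0 < d \<longrightarrow> dist (G t) (G t0) < \<delta>"
    using G t0 unfolding continuous_on_iff by blast
  obtain k where k_cont: "continuous_on {0..1} k" and k_int: "integral {0..1} k < 0"
    and k: "\<forall>t\<in>{0..1}. k t \<le> 0 \<and> (d \<le> dist t t0 \<longrightarrow> k t = 0)"
    and Gk: "0 \<le> integral {0..1} (\<lambda>t. G t * k t)"
    using tests[OF \<open>0 < d\<close>] by blast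
  have "integral {0..1} (\<lambda>t. G t * k t) \<le> integral {0..1} (\<lambda>t. \<delta> * k t)"
  proof (rule integral_le)
    show "(\<lambda>t. G t * k t) integrable_on {0..1}" "(\<lambda>t. \<delta> * k t) integrable_on {0..1}"
      by (intro integrable_continuous_interval continuous_intros G k_cont)+
    fix t :: real assume t: "t \<in> {0..1}"
    show "G t * k t \<le> \<delta> * k t"
    proof (cases "dist t t0 < d")
      case True
      then have "\<bar>G t - G t0\<bar> < \<delta>" using d t unfolding dist_real_def by blast
      then have "\<delta> \<le> G t" unfolding \<delta>_def abs_less_iff by linarith
      then show ?thesis using k t by (simp add: mult_right_mono_neg)
    next
      case False
      then show ?thesis using k t by simp
    qed
  qed
  also have "\<dots> = \<delta> * integral {0..1} k" by simp
  also have "\<dots> < 0" using \<open>0 < \<delta>\<close> k_int by (rule mult_pos_neg)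
  finally show False using Gk by simp
qed

lemma nonpos_at_1_if_hinge_integrals_nonneg:
  fixes G :: "real \<Rightarrow> real"
  assumes G: "continuous_on {0..1} G" and "integral {0..1} G = 0"
    and hinge: "\<And>a. a \<in> {0..1} \<Longrightarrow> 0 \<le> integral {0..1} (\<lambda>t. G t * min (1 - a) (1 - t))"
  shows "G 1 \<le> 0"
proof (rule nonpos_if_localized_integrals_nonneg[OF G])
  fix d :: real assume "0 < d"
  define a where "a = max (1 / 2) (1 - d / 2)"
  have a: "0 \<le> a" "a < 1" unfolding a_def using \<open>0 < d\<close> by auto
  let ?k = "\<lambda>t. min 0 (a - t)"
  have "integral {0..1} (\<lambda>t. G t * min (1 - a) (1 - t))
      = integral {0..1} (\<lambda>t. (1 - a) * G t + G t * ?k t)"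
    by (rule integral_cong) (auto simp: min_def algebra_simps)
  also have "\<dots> = (1 - a) * integral {0..1} G + integral {0..1} (\<lambda>t. G t * ?k t)"
    by (subst integral_add) (intro integrable_continuous_interval continuous_intros G | simp)+
  finally have "0 \<le> integral {0..1} (\<lambda>t. G t * ?k t)"
    using hinge[of a] a \<open>integral {0..1} G = 0\<close> by simp
  moreover have "integral {0..1} ?k < 0"
    using integral_unique[OF has_integral_min_0_diff[of a]] a by simp
  moreover have "?k t = 0" if "t \<in> {0..1}" "d \<le> dist t 1" for t
    using that unfolding a_def dist_real_def by auto
  ultimately show "\<exists>k. continuous_on {0..1} k \<and> integral {0..1} k < 0
      \<and> (\<forall>t\<in>{0..1}. k t \<le> 0 \<and> (d \<le> dist t 1 \<longrightarrow> k t = 0))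
      \<and> 0 \<le> integral {0..1} (\<lambda>t. G t * k t)"
    using continuous_on_min[OF continuous_on_const continuous_on_diff[OF continuous_on_const continuous_on_id]]
    by (intro exI[of _ ?k]) auto
qed simp

lemma nonpos_at_0_if_hinge_integrals_nonneg:
  fixes G :: "real \<Rightarrow> real"
  assumes G: "continuous_on {0..1} G" and "integral {0..1} (\<lambda>t. G t * (1 - t)) = 0"
    and hinge: "\<And>a. a \<in> {0..1} \<Longrightarrow> 0 \<le> integral {0..1} (\<lambda>t. G t * min (1 - a) (1 - t))"
  shows "G 0 \<le> 0"
proof (rule nonpos_if_localized_integrals_nonneg[OF G])
  fix d :: real assume "0 < d"
  define a where "a = min (1 / 2) (d / 2)"
  have a: "0 < a" "a \<le> 1" unfolding a_def using \<open>0 < d\<close> by auto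
  let ?k = "\<lambda>t. min (t - a) 0"
  have "integral {0..1} (\<lambda>t. G t * min (1 - a) (1 - t))
      = integral {0..1} (\<lambda>t. G t * (1 - t) + G t * ?k t)"
    by (rule integral_cong) (auto simp: min_def algebra_simps)
  also have "\<dots> = integral {0..1} (\<lambda>t. G t * (1 - t)) + integral {0..1} (\<lambda>t. G t * ?k t)"
    by (subst integral_add) (intro integrable_continuous_interval continuous_intros G | simp)+
  finally have "0 \<le> integral {0..1} (\<lambda>t. G t * ?k t)"
    using hinge[of a] a assms(2) by simp
  moreover have "integral {0..1} ?k < 0"
    using integral_unique[OF has_integral_min_diff_0[of a]] a by simp
  moreover have "?k t = 0" if "t \<in> {0..1}" "d \<le> dist t 0" for t
    using that unfolding a_def dist_real_def by auto
  ultimately show "\<exists>k. continuous_on {0..1} k \<and> integral {0..1} k < 0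
      \<and> (\<forall>t\<in>{0..1}. k t \<le> 0 \<and> (d \<le> dist t 0 \<longrightarrow> k t = 0))
      \<and> 0 \<le> integral {0..1} (\<lambda>t. G t * k t)"
    using continuous_on_min[OF continuous_on_diff[OF continuous_on_id continuous_on_const] continuous_on_const]
    by (intro exI[of _ ?k]) auto
qed simp

section \<open>Affine minimizers\<close>

lemma has_integral_inverse_square_affine:
  fixes m c :: real
  assumes "0 < m" "0 < c"
  shows "((\<lambda>t. 1 / (m * (1 - t) + c)\<^sup>2) has_integral 1 / (c * (c + m))) {0..1}"
proof -
  let ?H = "\<lambda>t. 1 / (m * (m * (1 - t) + c))"
  have "((\<lambda>t. 1 / (m * (1 - t) + c)\<^sup>2) has_integral ?H 1 - ?H 0) {0..1}"
  proof (rule fundamental_theorem_of_calculus_real)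
    fix x :: real assume "x \<in> {0..1}"
    then obtain y where y: "m * (1 - x) + c = y" "0 < y" using assms by (simp add: add_nonneg_pos)
    show "(?H has_real_derivative 1 / (m * (1 - x) + c)\<^sup>2) (at x)"
      by (rule derivative_eq_intros refl | simp only: y)+
        (use y assms in \<open>simp_all add: field_simps power2_eq_square\<close>)
  qed simp
  moreover have "?H 1 - ?H 0 = 1 / (c * (c + m))"
    using assms by (simp add: divide_simps)
  ultimately show ?thesis by simp
qed

lemma has_integral_affine_over_square_affine:
  fixes m c :: real
  assumes "0 < m" "0 < c"
  shows "((\<lambda>t. (1 - t) / (m * (1 - t) + c)\<^sup>2) has_integral
           (1 / m) * ((1 / m) * ln ((c + m) / c) - 1 / (c + m))) {0..1}"
proof -
  let ?H = "\<lambda>t. - ln (m * (1 - t) + c) / m\<^sup>2 - c / (m\<^sup>2 * (m * (1 - t) + c))"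
  have "((\<lambda>t. (1 - t) / (m * (1 - t) + c)\<^sup>2) has_integral ?H 1 - ?H 0) {0..1}"
  proof (rule fundamental_theorem_of_calculus_real)
    fix x :: real assume "x \<in> {0..1}"
    then obtain y where y: "m * (1 - x) + c = y" "0 < y" using assms by (simp add: add_nonneg_pos)
    have x: "1 - x = (y - c) / m" using assms y by (simp add: field_simps)
    show "(?H has_real_derivative (1 - x) / (m * (1 - x) + c)\<^sup>2) (at x)"
      apply (intro derivative_eq_intros)
      apply (simp_all only: y x)
      using y assms by (simp_all add: field_simps power2_eq_square)
  qed simp
  moreover have "?H 1 - ?H 0 = (1 / m) * ((1 / m) * ln ((c + m) / c) - 1 / (c + m))"
  proof -
    have "ln ((c + m) / c) = ln (m + c) - ln c" using assms by (simp add: ln_div add.commute)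
    with assms show ?thesis by (simp add: divide_simps power2_eq_square) (simp add: algebra_simps)
  qed
  ultimately show ?thesis by simp
qed

locale affine_minimizer =
  fixes \<beta> :: "nat \<Rightarrow> real" and \<phi> :: "real \<Rightarrow> real" and m c :: real
  assumes model: "is_model \<beta>" and minimizer: "is_minimizer \<beta> \<phi>"
    and m_pos: "0 < m" and c_pos: "0 < c"
    and phi_affine: "\<forall>t\<in>{0..1}. \<phi> t = m * (1 - t) + c"
begin

lemma affine_pos: "t \<in> {0..1} \<Longrightarrow> 0 < m * (1 - t) + c"
  using m_pos c_pos by (simp add: add_nonneg_pos)

lemma continuous_on_phi: "continuous_on {0..1} \<phi>"
  using minimizer by (simp add: is_minimizer_def classC_def)

lemma affine_variation_le:
  assumes "continuous_on {0..1} h" "0 < s0"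
    and "\<And>s. 0 < s \<Longrightarrow> s < s0 \<Longrightarrow> (\<lambda>t. m * (1 - t) + c + s * h t) \<in> classC"
  shows "integral {0..1} (\<lambda>t. h t / (m * (1 - t) + c)\<^sup>2)
      \<le> integral {0..1} (\<lambda>t. deriv (deriv (xi \<beta>)) t * h t)"
proof -
  have "integral {0..1} (\<lambda>t. h t / (\<phi> t)\<^sup>2) \<le> integral {0..1} (\<lambda>t. deriv (deriv (xi \<beta>)) t * h t)"
  proof (rule minimizer_first_variation[OF model minimizer _ assms(1,2)])
    show "\<forall>t\<in>{0..1}. 0 < \<phi> t" using phi_affine affine_pos by simp
    show "(\<lambda>t. \<phi> t + s * h t) \<in> classC" if "0 < s" "s < s0" for s
      using assms(3)[OF that] classC_cong[of "\<lambda>t. \<phi> t + s * h t"] phi_affine by simp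
  qed
  moreover have "integral {0..1} (\<lambda>t. h t / (\<phi> t)\<^sup>2) = integral {0..1} (\<lambda>t. h t / (m * (1 - t) + c)\<^sup>2)"
    using phi_affine by (intro integral_cong) simp
  ultimately show ?thesis by simp
qed

lemma integral_xi''_eq_inverse_square:
  "integral {0..1} (deriv (deriv (xi \<beta>))) = integral {0..1} (\<lambda>t. 1 / (m * (1 - t) + c)\<^sup>2)"
proof (rule antisym)
  have "integral {0..1} (\<lambda>t. (\<lambda>_. -1) t / (m * (1 - t) + c)\<^sup>2)
      \<le> integral {0..1} (\<lambda>t. deriv (deriv (xi \<beta>)) t * (\<lambda>_. -1) t)"
  proof (rule affine_variation_le[OF _ c_pos])
    fix s assume "0 < s" "s < c"
    then show "(\<lambda>t. m * (1 - t) + c + s * -1) \<in> classC"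
      using m_pos by (intro affine_hinge_in_classC[of m "c - s" 0 0]) auto
  qed simp
  then show "integral {0..1} (deriv (deriv (xi \<beta>))) \<le> integral {0..1} (\<lambda>t. 1 / (m * (1 - t) + c)\<^sup>2)"
    by simp
  have "integral {0..1} (\<lambda>t. (\<lambda>_. 1) t / (m * (1 - t) + c)\<^sup>2)
      \<le> integral {0..1} (\<lambda>t. deriv (deriv (xi \<beta>)) t * (\<lambda>_. 1) t)"
  proof (rule affine_variation_le[OF _ zero_less_one])
    fix s :: real assume "0 < s"
    then show "(\<lambda>t. m * (1 - t) + c + s * 1) \<in> classC"
      using m_pos c_pos by (intro affine_hinge_in_classC[of m "c + s" 0 0]) auto
  qed simp
  then show "integral {0..1} (\<lambda>t. 1 / (m * (1 - t) + c)\<^sup>2) \<le> integral {0..1} (deriv (deriv (xi \<beta>)))"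
    by simp
qed

lemma integral_xi''_mult_one_minus_eq:
  "integral {0..1} (\<lambda>t. deriv (deriv (xi \<beta>)) t * (1 - t))
    = integral {0..1} (\<lambda>t. (1 - t) / (m * (1 - t) + c)\<^sup>2)"
proof (rule antisym)
  have "integral {0..1} (\<lambda>t. (\<lambda>t. - (1 - t)) t / (m * (1 - t) + c)\<^sup>2)
      \<le> integral {0..1} (\<lambda>t. deriv (deriv (xi \<beta>)) t * (\<lambda>t. - (1 - t)) t)"
  proof (rule affine_variation_le[OF _ m_pos])
    fix s assume "0 < s" "s < m"
    then show "(\<lambda>t. m * (1 - t) + c + s * - (1 - t)) \<in> classC"
      using c_pos by (intro affine_hinge_in_classC[of "m - s" c 0 0]) (auto simp: algebra_simps)
  qed (intro continuous_intros)
  then have "integral {0..1} (\<lambda>t. - ((1 - t) / (m * (1 - t) + c)\<^sup>2))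
      \<le> integral {0..1} (\<lambda>t. - (deriv (deriv (xi \<beta>)) t * (1 - t)))"
    by (simp only: minus_divide_left mult_minus_right)
  then show "integral {0..1} (\<lambda>t. deriv (deriv (xi \<beta>)) t * (1 - t))
      \<le> integral {0..1} (\<lambda>t. (1 - t) / (m * (1 - t) + c)\<^sup>2)"
    unfolding integral_neg by linarith
  have "integral {0..1} (\<lambda>t. (1 - t) / (m * (1 - t) + c)\<^sup>2)
      \<le> integral {0..1} (\<lambda>t. deriv (deriv (xi \<beta>)) t * (1 - t))"
  proof (rule affine_variation_le[OF _ zero_less_one])
    fix s :: real assume "0 < s"
    then show "(\<lambda>t. m * (1 - t) + c + s * (1 - t)) \<in> classC"
      using m_pos c_pos by (intro affine_hinge_in_classC[of "m + s" c 0 0]) (auto simp: algebra_simps)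
  qed (intro continuous_intros)
  then show "integral {0..1} (\<lambda>t. (1 - t) / (m * (1 - t) + c)\<^sup>2)
      \<le> integral {0..1} (\<lambda>t. deriv (deriv (xi \<beta>)) t * (1 - t))" .
qed

lemma integral_xi''_mult_hinge_ge:
  assumes "a \<in> {0..1}"
  shows "integral {0..1} (\<lambda>t. min (1 - a) (1 - t) / (m * (1 - t) + c)\<^sup>2)
    \<le> integral {0..1} (\<lambda>t. deriv (deriv (xi \<beta>)) t * min (1 - a) (1 - t))"
proof (rule affine_variation_le[OF _ zero_less_one])
  fix s :: real assume "0 < s"
  then show "(\<lambda>t. m * (1 - t) + c + s * min (1 - a) (1 - t)) \<in> classC"
    using m_pos c_pos assms by (intro affine_hinge_in_classC[of m c s a]) auto
qed (intro continuous_intros)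

lemma xi_at_1: "xi \<beta> 1 = (1 / m) * ((1 / m) * ln ((c + m) / c) - 1 / (c + m))"
  using integral_xi''_mult_one_minus_eq integral_unique[OF has_integral_xi''_mult_one_minus[OF model]]
    integral_unique[OF has_integral_affine_over_square_affine[OF m_pos c_pos]] by simp

lemma deriv_xi_at_1: "deriv (xi \<beta>) 1 = 1 / (c * (c + m))"
  using integral_xi''_eq_inverse_square integral_unique[OF has_integral_xi''[OF model]]
    integral_unique[OF has_integral_inverse_square_affine[OF m_pos c_pos]] by simp

definition defect :: "real \<Rightarrow> real" where
  "defect t = deriv (deriv (xi \<beta>)) t - 1 / (m * (1 - t) + c)\<^sup>2"

lemma continuous_on_defect: "continuous_on {0..1} defect"
  unfolding defect_def using affine_pos
  by (intro continuous_intros continuous_on_xi''[OF model]) (use affine_pos in force)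

lemma integral_defect_mult:
  assumes "continuous_on {0..1} w"
  shows "integral {0..1} (\<lambda>t. defect t * w t)
    = integral {0..1} (\<lambda>t. deriv (deriv (xi \<beta>)) t * w t)
      - integral {0..1} (\<lambda>t. w t / (m * (1 - t) + c)\<^sup>2)"
proof -
  have "integral {0..1} (\<lambda>t. defect t * w t)
      = integral {0..1} (\<lambda>t. deriv (deriv (xi \<beta>)) t * w t - w t / (m * (1 - t) + c)\<^sup>2)"
    unfolding defect_def by (rule integral_cong) (simp add: algebra_simps)
  also have "\<dots> = integral {0..1} (\<lambda>t. deriv (deriv (xi \<beta>)) t * w t)
      - integral {0..1} (\<lambda>t. w t / (m * (1 - t) + c)\<^sup>2)"
    by (intro integral_diff integrable_continuous_interval continuous_intros continuous_on_xi''[OF model] assms)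
      (use affine_pos in force)
  finally show ?thesis .
qed

lemma xi''_at_1_le: "deriv (deriv (xi \<beta>)) 1 \<le> 1 / c\<^sup>2"
proof -
  have "defect 1 \<le> 0"
  proof (rule nonpos_at_1_if_hinge_integrals_nonneg[OF continuous_on_defect])
    show "integral {0..1} defect = 0"
      using integral_defect_mult[of "\<lambda>_. 1"] integral_xi''_eq_inverse_square by simp
    show "0 \<le> integral {0..1} (\<lambda>t. defect t * min (1 - a) (1 - t))" if "a \<in> {0..1}" for a
    proof -
      have "continuous_on {0..1} (\<lambda>t::real. min (1 - a) (1 - t))" by (intro continuous_intros)
      then show ?thesis using integral_defect_mult integral_xi''_mult_hinge_ge[OF that] by simp
    qed
  qed
  then show ?thesis by (simp add: defect_def)
qed

lemma xi''_at_0_le: "deriv (deriv (xi \<beta>)) 0 \<le> 1 / (c + m)\<^sup>2"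
proof -
  have "defect 0 \<le> 0"
  proof (rule nonpos_at_0_if_hinge_integrals_nonneg[OF continuous_on_defect])
    show "integral {0..1} (\<lambda>t. defect t * (1 - t)) = 0"
    proof -
      have "continuous_on {0..1} (\<lambda>t::real. 1 - t)" by (intro continuous_intros)
      then show ?thesis using integral_defect_mult integral_xi''_mult_one_minus_eq by simp
    qed
    show "0 \<le> integral {0..1} (\<lambda>t. defect t * min (1 - a) (1 - t))" if "a \<in> {0..1}" for a
    proof -
      have "continuous_on {0..1} (\<lambda>t::real. min (1 - a) (1 - t))" by (intro continuous_intros)
      then show ?thesis using integral_defect_mult integral_xi''_mult_hinge_ge[OF that] by simp
    qed
  qed
  then show ?thesis by (simp add: defect_def add.commute)
qed

end

lemma conj_eta_has_real_derivative:
  assumes "continuous_on {0..1} (\<lambda>\<tau>. 1 / (\<phi> \<tau>)\<^sup>2)" "x \<in> {0..1}"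
  shows "(conj_eta \<beta> \<phi> has_real_derivative integral {0..x} (\<lambda>\<tau>. 1 / (\<phi> \<tau>)\<^sup>2)) (at x within {0..1})"
proof -
  let ?J = "\<lambda>s. integral {0..s} (\<lambda>\<tau>. 1 / (\<phi> \<tau>)\<^sup>2)"
  have "continuous_on {0..1} ?J"
    using integral_has_real_derivative[OF assms(1)]
    by (intro DERIV_continuous_on) blast
  then have "((\<lambda>t. integral {t..1} ?J) has_real_derivative - ?J x) (at x within {0..1})"
    using assms(2) by (rule integral_has_real_derivative')
  then have "((\<lambda>t. xi \<beta> 1 - integral {t..1} ?J) has_real_derivative 0 - - ?J x) (at x within {0..1})"
    by (intro DERIV_diff DERIV_const)
  then show ?thesis unfolding conj_eta_def by simp
qed

theorem corollary1p23:
  fixes \<beta> :: "nat \<Rightarrow> real" and \<phi> :: "real \<Rightarrow> real" and m c :: real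
  assumes "is_model \<beta>"
    and "is_minimizer \<beta> \<phi>"
    and "m > 0" and "c > 0"
    and "\<forall>t\<in>{0..1}. \<phi> t = m * (1 - t) + c"
  shows "(xi \<beta> 1 = (1 / m) * ((1 / m) * ln ((c + m) / c) - 1 / (c + m))
           \<and> 1 / deriv (xi \<beta>) 1 = c * (c + m))
       \<and> (\<exists>\<eta>1 \<eta>2. (\<forall>x\<in>{0..1}. (conj_eta \<beta> \<phi> has_real_derivative \<eta>1 x) (at x within {0..1}))
           \<and> (\<eta>1 has_real_derivative \<eta>2) (at 1 within {0..1})
           \<and> \<eta>2 \<ge> deriv (deriv (xi \<beta>)) 1)
       \<and> (\<exists>\<eta>1 \<eta>2. (\<forall>x\<in>{0..1}. (conj_eta \<beta> \<phi> has_real_derivative \<eta>1 x) (at x within {0..1}))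
           \<and> (\<eta>1 has_real_derivative \<eta>2) (at 0 within {0..1})
           \<and> \<eta>2 \<ge> deriv (deriv (xi \<beta>)) 0)"
proof -
  interpret affine_minimizer \<beta> \<phi> m c
    using assms by unfold_locales
  let ?q = "\<lambda>\<tau>. 1 / (\<phi> \<tau>)\<^sup>2"
  have q: "continuous_on {0..1} ?q"
    by (intro continuous_intros continuous_on_phi) (use phi_affine affine_pos in force)
  have eta': "\<forall>x\<in>{0..1}. (conj_eta \<beta> \<phi> has_real_derivative integral {0..x} ?q) (at x within {0..1})"
    using conj_eta_has_real_derivative[OF q] by blast
  have eta'': "((\<lambda>x. integral {0..x} ?q) has_real_derivative ?q x) (at x within {0..1})"
    if "x \<in> {0..1}" for x
    using integral_has_real_derivative[OF q that] .
  have "?q 1 = 1 / c\<^sup>2" "?q 0 = 1 / (c + m)\<^sup>2" using phi_affine by (auto simp: add.commute)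
  then show ?thesis
    using xi_at_1 deriv_xi_at_1 xi''_at_1_le xi''_at_0_le eta' eta''[of 0] eta''[of 1] by auto
qed

end
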